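(* Let $G=(V,E)$ be a directed graph with real edge weights and no cycle of negative or zero weight, and let $x_1,y_1,x_2,y_2\in V$. Then $$F_{\mathrm{disj}}(x_1,y_1,x_2,y_2)=F(x_1,y_1)F(x_2,y_2)-\sum_{v\in V\setminus(\{x_1,y_1\}\cap\{x_2,y_2\})}D_v(x_1,y_1,x_2,y_2).$$
   Context: Introduce an indeterminate $z_e$ per edge; polynomials have coefficients in a field of characteristic two. For a simple path $P$, $f(P)$ is the product of $z_e$ over its edges ($1$ for a single vertex). $\Pi(x,y)$ is the set of shortest $x$–$y$ paths and $F(x,y)=\sum_{P\in\Pi(x,y)}f(P)$. Paths from $x_1$ to $y_1$ and from $x_2$ to $y_2$ are internally vertex-disjoint if they share no vertex outside $\{x_1,y_1\}\cap\{x_2,y_2\}$. $P[x,y]$ denotes the subpath from $x$ to $y$. $F_{\mathrm{disj}}(x_1,y_1,x_2,y_2)=\sum f(P_1)f(P_2)$ over internally vertex-disjoint pairs $(P_1,P_2)\in\Pi(x_1,y_1)\times\Pi(x_2,y_2)$. $D_v(x_1,y_1,x_2,y_2)=\sum f(P_1)f(P_2)$ over pairs $(P_1,P_2)\in\Pi(x_1,y_1)\times\Pi(x_2,y_2)$ such that $v\in V(P_1)\cap V(P_2)$ and $P_1[x_1,v]$ is internally vertex-disjoint both from $P_2[x_2,v]$ and from $P_2[v,y_2]$. *)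

theory Defs
  imports Complex_Main "HOL-Library.Poly_Mapping"
begin

text \<open>Polynomials over a field 'k (of characteristic two) in indeterminates z_e, e an edge,
  represented as Poly_Mapping from monomials (edge to nat maps) to coefficients.\<close>

type_synonym ('v,'k) epoly = "(('v \<times> 'v) \<Rightarrow>\<^sub>0 nat) \<Rightarrow>\<^sub>0 'k"

definition zvar :: "'v \<times> 'v \<Rightarrow> ('v,'k::comm_ring_1) epoly" where
  "zvar e = Poly_Mapping.single (Poly_Mapping.single e 1) 1"

definition is_path :: "('v \<times> 'v) set \<Rightarrow> 'v list \<Rightarrow> 'v \<Rightarrow> 'v \<Rightarrow> bool" where
  "is_path E P x y \<longleftrightarrow> P \<noteq> [] \<and> hd P = x \<and> last P = y \<and> distinct P \<and>
     (\<forall>i. Suc i < length P \<longrightarrow> (P ! i, P ! Suc i) \<in> E)"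

definition path_edges :: "'v list \<Rightarrow> ('v \<times> 'v) list" where
  "path_edges P = zip P (tl P)"

definition pweight :: "('v \<times> 'v \<Rightarrow> real) \<Rightarrow> 'v list \<Rightarrow> real" where
  "pweight w P = sum_list (map w (path_edges P))"

text \<open>Directed cycle v0 ... vk v0 (k \<ge> 0, loops allowed) and its weight.\<close>
definition is_cycle :: "('v \<times> 'v) set \<Rightarrow> 'v list \<Rightarrow> bool" where
  "is_cycle E C \<longleftrightarrow> C \<noteq> [] \<and> is_path E C (hd C) (last C) \<and> (last C, hd C) \<in> E"

definition cweight :: "('v \<times> 'v \<Rightarrow> real) \<Rightarrow> 'v list \<Rightarrow> real" where
  "cweight w C = pweight w C + w (last C, hd C)"

definition Pi_sp :: "('v \<times> 'v) set \<Rightarrow> ('v \<times> 'v \<Rightarrow> real) \<Rightarrow> 'v \<Rightarrow> 'v \<Rightarrow> 'v list set" where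
  "Pi_sp E w x y = {P. is_path E P x y \<and> (\<forall>Q. is_path E Q x y \<longrightarrow> pweight w P \<le> pweight w Q)}"

definition fP :: "'v list \<Rightarrow> ('v,'k::comm_ring_1) epoly" where
  "fP P = prod_list (map zvar (path_edges P))"

definition Fsp :: "('v \<times> 'v) set \<Rightarrow> ('v \<times> 'v \<Rightarrow> real) \<Rightarrow> 'v \<Rightarrow> 'v \<Rightarrow> ('v,'k::comm_ring_1) epoly" where
  "Fsp E w x y = (\<Sum>P\<in>Pi_sp E w x y. fP P)"

definition int_disj :: "'v \<Rightarrow> 'v \<Rightarrow> 'v \<Rightarrow> 'v \<Rightarrow> 'v list \<Rightarrow> 'v list \<Rightarrow> bool" where
  "int_disj x1 y1 x2 y2 P1 P2 \<longleftrightarrow> set P1 \<inter> set P2 \<subseteq> {x1, y1} \<inter> {x2, y2}"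

definition sub_to :: "'v list \<Rightarrow> 'v \<Rightarrow> 'v list" where
  "sub_to P v = takeWhile (\<lambda>u. u \<noteq> v) P @ [v]"

definition sub_from :: "'v list \<Rightarrow> 'v \<Rightarrow> 'v list" where
  "sub_from P v = dropWhile (\<lambda>u. u \<noteq> v) P"

definition Fdisj :: "('v \<times> 'v) set \<Rightarrow> ('v \<times> 'v \<Rightarrow> real) \<Rightarrow> 'v \<Rightarrow> 'v \<Rightarrow> 'v \<Rightarrow> 'v \<Rightarrow> ('v,'k::comm_ring_1) epoly" where
  "Fdisj E w x1 y1 x2 y2 =
     (\<Sum>(P1,P2)\<in>{(P1,P2). P1 \<in> Pi_sp E w x1 y1 \<and> P2 \<in> Pi_sp E w x2 y2 \<and> int_disj x1 y1 x2 y2 P1 P2}.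
        fP P1 * fP P2)"

definition Dv :: "('v \<times> 'v) set \<Rightarrow> ('v \<times> 'v \<Rightarrow> real) \<Rightarrow> 'v \<Rightarrow> 'v \<Rightarrow> 'v \<Rightarrow> 'v \<Rightarrow> 'v \<Rightarrow> ('v,'k::comm_ring_1) epoly" where
  "Dv E w v x1 y1 x2 y2 =
     (\<Sum>(P1,P2)\<in>{(P1,P2). P1 \<in> Pi_sp E w x1 y1 \<and> P2 \<in> Pi_sp E w x2 y2 \<and>
          v \<in> set P1 \<inter> set P2 \<and>
          int_disj x1 v x2 v (sub_to P1 v) (sub_to P2 v) \<and>
          int_disj x1 v v y2 (sub_to P1 v) (sub_from P2 v)}.
        fP P1 * fP P2)"

end

theory Submission
  imports Defs
begin

text \<open>Expanding the product \<open>F(x\<^sub>1,y\<^sub>1) F(x\<^sub>2,y\<^sub>2)\<close> gives a sum over all pairs of shortest paths;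
  the pairs that are not internally disjoint are exactly the ones subtracted. Such a pair
  meets outside \<open>{x\<^sub>1,y\<^sub>1} \<inter> {x\<^sub>2,y\<^sub>2}\<close>, and walking along \<open>P\<^sub>1\<close> there is a unique first vertex \<open>v\<close>
  of this kind; the defining condition of \<open>D\<^sub>v\<close> says precisely that \<open>v\<close> is this first vertex.
  Hence the non-disjoint pairs are partitioned according to \<open>v\<close>.\<close>

lemma is_path_set_subset:
  assumes "is_path E P x y" "E \<subseteq> V \<times> V" "x \<in> V"
  shows "set P \<subseteq> V"
proof
  fix u assume "u \<in> set P"
  then obtain i where i: "i < length P" "P ! i = u" by (auto simp: in_set_conv_nth)
  show "u \<in> V"
  proof (cases i)
    case 0
    then show ?thesis using assms i hd_conv_nth[of P] by (auto simp: is_path_def)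
  next
    case (Suc j)
    then have "(P ! j, P ! i) \<in> E" using assms(1) i unfolding is_path_def by blast
    then show ?thesis using assms(2) i by auto
  qed
qed

lemma finite_Pi_sp:
  assumes "finite V" "E \<subseteq> V \<times> V" "x \<in> V"
  shows "finite (Pi_sp E w x y)"
proof (rule finite_subset)
  show "Pi_sp E w x y \<subseteq> {xs. set xs \<subseteq> V \<and> length xs \<le> card V}"
  proof
    fix P assume "P \<in> Pi_sp E w x y"
    then have P: "is_path E P x y" by (simp add: Pi_sp_def)
    then have V: "set P \<subseteq> V" using assms(2,3) by (rule is_path_set_subset)
    have "length P = card (set P)" using P by (simp add: is_path_def distinct_card)
    also have "\<dots> \<le> card V" using assms(1) V by (rule card_mono)
    finally show "P \<in> {xs. set xs \<subseteq> V \<and> length xs \<le> card V}" using V by simp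
  qed
  show "finite {xs. set xs \<subseteq> V \<and> length xs \<le> card V}"
    using assms(1) by (rule finite_lists_length_le)
qed

lemma takeWhile_neq_not_last:
  "distinct P \<Longrightarrow> v \<in> set P \<Longrightarrow> u \<in> set (takeWhile (\<lambda>a. a \<noteq> v) P) \<Longrightarrow> u \<noteq> last P"
  by (induction P) (auto split: if_splits dest: set_takeWhileD)

lemma hd_in_dropWhile_neq:
  "distinct P \<Longrightarrow> hd P \<in> set (dropWhile (\<lambda>a. a \<noteq> v) P) \<Longrightarrow> hd P = v"
  by (cases P) (auto split: if_splits dest: set_dropWhileD)

lemma takeWhile_neq_order:
  "v \<in> set P \<Longrightarrow> v' \<in> set P \<Longrightarrow> v \<noteq> v' \<Longrightarrow>
    v' \<in> set (takeWhile (\<lambda>a. a \<noteq> v) P) \<or> v \<in> set (takeWhile (\<lambda>a. a \<noteq> v') P)"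
  by (induction P) auto

lemma ex_first_in_list:
  "\<exists>v\<in>set P. Q v \<Longrightarrow> \<exists>v\<in>set P. Q v \<and> (\<forall>u\<in>set (takeWhile (\<lambda>a. a \<noteq> v) P). \<not> Q u)"
proof (induction P)
  case (Cons a P)
  show ?case
  proof (cases "Q a")
    case False
    with Cons obtain v where "v \<in> set P" "Q v" "\<forall>u\<in>set (takeWhile (\<lambda>a. a \<noteq> v) P). \<not> Q u"
      by auto
    moreover have "v \<noteq> a" using False \<open>Q v\<close> by auto
    ultimately show ?thesis using False by auto
  qed auto
qed simp

lemma set_sub_to_Un_sub_from:
  "v \<in> set P \<Longrightarrow> set P = set (sub_to P v) \<union> set (sub_from P v)"
  unfolding sub_to_def sub_from_def by (induction P) auto

lemma set_sub_to: "set (sub_to P v) = insert v (set (takeWhile (\<lambda>a. a \<noteq> v) P))"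
  by (simp add: sub_to_def)

lemma Dv_condition_iff:
  assumes P1: "is_path E P1 x1 y1" and P2: "is_path E P2 x2 y2"
    and v: "v \<in> set P1" "v \<in> set P2"
  shows "int_disj x1 v x2 v (sub_to P1 v) (sub_to P2 v) \<and>
         int_disj x1 v v y2 (sub_to P1 v) (sub_from P2 v) \<longleftrightarrow>
         set (takeWhile (\<lambda>a. a \<noteq> v) P1) \<inter> set P2 \<subseteq> {x1, y1} \<inter> {x2, y2}"
    (is "?disj \<longleftrightarrow> ?first")
proof
  assume ?disj
  show ?first
  proof
    fix u assume u: "u \<in> set (takeWhile (\<lambda>a. a \<noteq> v) P1) \<inter> set P2"
    then have "u \<noteq> v" by (auto dest: set_takeWhileD)
    moreover have "u \<in> set (sub_to P2 v) \<or> u \<in> set (sub_from P2 v)"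
      using set_sub_to_Un_sub_from[OF v(2)] u by auto
    ultimately show "u \<in> {x1, y1} \<inter> {x2, y2}"
      using \<open>?disj\<close> u by (auto simp: int_disj_def set_sub_to)
  qed
next
  assume ?first
  have x1: "u = x1" if "u \<in> set (takeWhile (\<lambda>a. a \<noteq> v) P1)" "u \<in> set P2" for u
    using \<open>?first\<close> that takeWhile_neq_not_last[OF _ v(1) that(1)] P1
    by (auto simp: is_path_def)
  have "u \<in> {x1, v} \<inter> {x2, v}" if "u \<in> set (sub_to P1 v)" "u \<in> set (sub_to P2 v)" for u
  proof (cases "u = v")
    case False
    then have "u \<in> set (takeWhile (\<lambda>a. a \<noteq> v) P1)" "u \<in> set (takeWhile (\<lambda>a. a \<noteq> v) P2)"
      using that by (auto simp: set_sub_to)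
    moreover from this have "u \<in> set P2" by (auto dest: set_takeWhileD)
    ultimately show ?thesis
      using x1 \<open>?first\<close> takeWhile_neq_not_last[OF _ v(2)] P2 by (auto simp: is_path_def)
  qed simp
  moreover have "u \<in> {x1, v} \<inter> {v, y2}" if "u \<in> set (sub_to P1 v)" "u \<in> set (sub_from P2 v)" for u
  proof (cases "u = v")
    case False
    then have "u \<in> set (takeWhile (\<lambda>a. a \<noteq> v) P1)" "u \<in> set (dropWhile (\<lambda>a. a \<noteq> v) P2)"
      using that by (auto simp: set_sub_to sub_from_def)
    moreover from this have "u \<in> set P2" by (auto dest: set_dropWhileD)
    ultimately show ?thesis
      using x1 \<open>?first\<close> hd_in_dropWhile_neq[of P2 v] False P2 by (auto simp: is_path_def)
  qed simp
  ultimately show ?disj by (auto simp: int_disj_def)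
qed

definition meeting_pairs ::
    "('v \<times> 'v) set \<Rightarrow> ('v \<times> 'v \<Rightarrow> real) \<Rightarrow> 'v \<Rightarrow> 'v \<Rightarrow> 'v \<Rightarrow> 'v \<Rightarrow> ('v list \<times> 'v list) set" where
  "meeting_pairs E w x1 y1 x2 y2 = {(P1, P2). P1 \<in> Pi_sp E w x1 y1 \<and> P2 \<in> Pi_sp E w x2 y2 \<and>
     \<not> int_disj x1 y1 x2 y2 P1 P2}"

definition first_meeting_pairs ::
    "('v \<times> 'v) set \<Rightarrow> ('v \<times> 'v \<Rightarrow> real) \<Rightarrow> 'v \<Rightarrow> 'v \<Rightarrow> 'v \<Rightarrow> 'v \<Rightarrow> 'v \<Rightarrow> ('v list \<times> 'v list) set" where
  "first_meeting_pairs E w v x1 y1 x2 y2 = {(P1, P2). P1 \<in> Pi_sp E w x1 y1 \<and> P2 \<in> Pi_sp E w x2 y2 \<and>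
     v \<in> set P1 \<inter> set P2 \<and>
     set (takeWhile (\<lambda>a. a \<noteq> v) P1) \<inter> set P2 \<subseteq> {x1, y1} \<inter> {x2, y2}}"

lemma Dv_eq_sum_first_meeting_pairs:
  "Dv E w v x1 y1 x2 y2 = (\<Sum>(P1, P2)\<in>first_meeting_pairs E w v x1 y1 x2 y2. fP P1 * fP P2)"
proof -
  have "{(P1, P2). P1 \<in> Pi_sp E w x1 y1 \<and> P2 \<in> Pi_sp E w x2 y2 \<and> v \<in> set P1 \<inter> set P2 \<and>
          int_disj x1 v x2 v (sub_to P1 v) (sub_to P2 v) \<and>
          int_disj x1 v v y2 (sub_to P1 v) (sub_from P2 v)} = first_meeting_pairs E w v x1 y1 x2 y2"
    using Dv_condition_iff by (fastforce simp: first_meeting_pairs_def Pi_sp_def)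
  then show ?thesis by (simp add: Dv_def)
qed

lemma first_meeting_pairs_disjoint:
  assumes "v \<notin> {x1, y1} \<inter> {x2, y2}" "v' \<notin> {x1, y1} \<inter> {x2, y2}" "v \<noteq> v'"
  shows "first_meeting_pairs E w v x1 y1 x2 y2 \<inter> first_meeting_pairs E w v' x1 y1 x2 y2 = {}"
  using takeWhile_neq_order[of v _ v'] assms by (fastforce simp: first_meeting_pairs_def)

lemma meeting_pairs_eq_UN_first_meeting_pairs:
  assumes "E \<subseteq> V \<times> V" "x1 \<in> V"
  shows "meeting_pairs E w x1 y1 x2 y2 =
    (\<Union>v\<in>V - {x1, y1} \<inter> {x2, y2}. first_meeting_pairs E w v x1 y1 x2 y2)"
proof (intro equalityI subsetI)
  fix p assume "p \<in> meeting_pairs E w x1 y1 x2 y2"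
  then obtain P1 P2 where p: "p = (P1, P2)" "P1 \<in> Pi_sp E w x1 y1" "P2 \<in> Pi_sp E w x2 y2"
    and "\<exists>v\<in>set P1. v \<in> set P2 \<and> v \<notin> {x1, y1} \<inter> {x2, y2}"
    by (auto simp: meeting_pairs_def int_disj_def)
  then obtain v where v: "v \<in> set P1" "v \<in> set P2" "v \<notin> {x1, y1} \<inter> {x2, y2}"
    and "\<forall>u\<in>set (takeWhile (\<lambda>a. a \<noteq> v) P1). \<not> (u \<in> set P2 \<and> u \<notin> {x1, y1} \<inter> {x2, y2})"
    using ex_first_in_list[of P1 "\<lambda>u. u \<in> set P2 \<and> u \<notin> {x1, y1} \<inter> {x2, y2}"] by blast
  then have "p \<in> first_meeting_pairs E w v x1 y1 x2 y2"
    using p by (auto simp: first_meeting_pairs_def)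
  moreover have "v \<in> V" using is_path_set_subset[OF _ assms] p(2) v(1) by (auto simp: Pi_sp_def)
  ultimately show "p \<in> (\<Union>v\<in>V - {x1, y1} \<inter> {x2, y2}. first_meeting_pairs E w v x1 y1 x2 y2)"
    using v(3) by blast
qed (auto simp: meeting_pairs_def first_meeting_pairs_def int_disj_def)

lemma sum_meeting_pairs_eq_sum_Dv:
  assumes "finite V" "E \<subseteq> V \<times> V" "x1 \<in> V" "x2 \<in> V"
  shows "(\<Sum>(P1, P2)\<in>meeting_pairs E w x1 y1 x2 y2. fP P1 * fP P2) =
    (\<Sum>v\<in>V - {x1, y1} \<inter> {x2, y2}. Dv E w v x1 y1 x2 y2 :: ('v, 'k::comm_ring_1) epoly)"
proof -
  have "finite (Pi_sp E w x1 y1 \<times> Pi_sp E w x2 y2)"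
    using finite_Pi_sp[OF assms(1-3)] finite_Pi_sp[OF assms(1,2,4)] by blast
  then have "finite (first_meeting_pairs E w v x1 y1 x2 y2)" for v
    by (rule finite_subset[rotated]) (auto simp: first_meeting_pairs_def)
  moreover have "\<forall>v\<in>V - {x1, y1} \<inter> {x2, y2}. \<forall>v'\<in>V - {x1, y1} \<inter> {x2, y2}. v \<noteq> v' \<longrightarrow>
      first_meeting_pairs E w v x1 y1 x2 y2 \<inter> first_meeting_pairs E w v' x1 y1 x2 y2 = {}"
    by (intro ballI impI first_meeting_pairs_disjoint) (auto dest: DiffD2)
  ultimately show ?thesis
    unfolding meeting_pairs_eq_UN_first_meeting_pairs[OF assms(2,3)] Dv_eq_sum_first_meeting_pairs
    by (intro sum.UNION_disjoint finite_Diff assms(1)) simp_all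
qed

lemma Fsp_mult_Fsp_eq_Fdisj_plus_meeting:
  assumes "finite V" "E \<subseteq> V \<times> V" "x1 \<in> V" "x2 \<in> V"
  shows "Fsp E w x1 y1 * Fsp E w x2 y2 = (Fdisj E w x1 y1 x2 y2 :: ('v, 'k::comm_ring_1) epoly) +
    (\<Sum>(P1, P2)\<in>meeting_pairs E w x1 y1 x2 y2. fP P1 * fP P2)"
proof -
  let ?D = "{(P1, P2). P1 \<in> Pi_sp E w x1 y1 \<and> P2 \<in> Pi_sp E w x2 y2 \<and> int_disj x1 y1 x2 y2 P1 P2}"
  have "Pi_sp E w x1 y1 \<times> Pi_sp E w x2 y2 = ?D \<union> meeting_pairs E w x1 y1 x2 y2"
    by (auto simp: meeting_pairs_def)
  moreover have "finite (Pi_sp E w x1 y1 \<times> Pi_sp E w x2 y2)"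
    using finite_Pi_sp[OF assms(1-3)] finite_Pi_sp[OF assms(1,2,4)] by blast
  ultimately show ?thesis
    unfolding Fsp_def Fdisj_def sum_product sum.cartesian_product case_prod_unfold
    by (subst sum.union_disjoint[symmetric]) (auto simp: meeting_pairs_def)
qed

theorem lemma9:
  fixes V :: "'v set" and E :: "('v \<times> 'v) set" and w :: "'v \<times> 'v \<Rightarrow> real"
    and x1 y1 x2 y2 :: 'v
  assumes "finite V" and "E \<subseteq> V \<times> V"
    and "\<And>C. is_cycle E C \<Longrightarrow> cweight w C > 0"
    and "x1 \<in> V" "y1 \<in> V" "x2 \<in> V" "y2 \<in> V"
    and "CHAR('k::field) = 2"
  shows "(Fdisj E w x1 y1 x2 y2 :: ('v,'k) epoly) =
           Fsp E w x1 y1 * Fsp E w x2 y2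
           - (\<Sum>v\<in>V - ({x1, y1} \<inter> {x2, y2}). Dv E w v x1 y1 x2 y2)"
proof -
  have "Fsp E w x1 y1 * Fsp E w x2 y2 = (Fdisj E w x1 y1 x2 y2 :: ('v,'k) epoly) +
      (\<Sum>(P1, P2)\<in>meeting_pairs E w x1 y1 x2 y2. fP P1 * fP P2)"
    using assms(1,2,4,6) by (rule Fsp_mult_Fsp_eq_Fdisj_plus_meeting)
  also have "\<dots> = Fdisj E w x1 y1 x2 y2 + (\<Sum>v\<in>V - ({x1, y1} \<inter> {x2, y2}). Dv E w v x1 y1 x2 y2)"
    using sum_meeting_pairs_eq_sum_Dv[OF assms(1,2,4,6)] by simp
  finally show ?thesis by simp
qed

end
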